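(* Let $X\in\mathrm{Alex}^n(0)$ and let $f:X\to\mathbb{R}$ be a Lipschitz continuous affine function with optimal Lipschitz constant $\|f\|$. If there is a unit-speed line $\gamma:\mathbb{R}\to X$ with $\infty>(f\circ\gamma)'=\|f\|>0$, then there is a metric space $Z$ and an isometry $X\cong Z\times\mathbb{R}$ under which $f(z,t)=\|f\|\,t$.
   Context: $\mathrm{Alex}^n(0)$ denotes the class of complete geodesic metric spaces of Hausdorff dimension $n<\infty$ with nonnegative curvature in the sense of Alexandrov. A function is affine if its composition with every geodesic is affine. A unit-speed line is a curve $\gamma:\mathbb{R}\to X$ with $d(\gamma(s),\gamma(t))=|s-t|$ for all $s,t$. *)

theory Defs
  imports "HOL-Analysis.Analysis"
begin

definition unit_segment :: "(real \<Rightarrow> 'a::metric_space) \<Rightarrow> real \<Rightarrow> bool" where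
  "unit_segment \<sigma> L \<longleftrightarrow> 0 \<le> L \<and>
     (\<forall>s\<in>{0..L}. \<forall>t\<in>{0..L}. dist (\<sigma> s) (\<sigma> t) = \<bar>s - t\<bar>)"

definition geodesic_space :: "'a::metric_space itself \<Rightarrow> bool" where
  "geodesic_space _ \<longleftrightarrow> (\<forall>x y::'a. \<exists>\<sigma>. unit_segment \<sigma> (dist x y) \<and> \<sigma> 0 = x \<and> \<sigma> (dist x y) = y)"

text \<open>Nonnegative curvature in the sense of Alexandrov (triangle comparison with the
  Euclidean plane): for every point p and every geodesic \<sigma> of length L,
  d(p,\<sigma> t)^2 \<ge> (1-t/L) d(p,\<sigma> 0)^2 + (t/L) d(p,\<sigma> L)^2 - t (L-t)  (multiplied by L).\<close>
definition curv_nonneg :: "'a::metric_space itself \<Rightarrow> bool" where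
  "curv_nonneg _ \<longleftrightarrow> (\<forall>(p::'a) \<sigma> L t. unit_segment \<sigma> L \<longrightarrow> t \<in> {0..L} \<longrightarrow>
      L * (dist p (\<sigma> t))\<^sup>2 \<ge> (L - t) * (dist p (\<sigma> 0))\<^sup>2 + t * (dist p (\<sigma> L))\<^sup>2 - t * (L - t) * L)"

definition hausdorff_delta :: "real \<Rightarrow> real \<Rightarrow> 'a::metric_space set \<Rightarrow> ennreal" where
  "hausdorff_delta s \<delta> A = Inf {(\<Sum>i. ennreal (diameter (U i) powr s)) | U :: nat \<Rightarrow> 'a set.
      A \<subseteq> (\<Union>i. U i) \<and> (\<forall>i. bounded (U i) \<and> diameter (U i) \<le> \<delta>)}"

definition hausdorff_measure :: "real \<Rightarrow> 'a::metric_space set \<Rightarrow> ennreal" where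
  "hausdorff_measure s A = (SUP \<delta>\<in>{0<..}. hausdorff_delta s \<delta> A)"

definition hausdorff_dim :: "'a::metric_space set \<Rightarrow> ereal" where
  "hausdorff_dim A = Inf {ereal s | s. 0 < s \<and> hausdorff_measure s A = 0}"

text \<open>Alex^n(0): complete geodesic spaces of Hausdorff dimension n with curvature \<ge> 0.
  Completeness is provided by the type class complete_space.\<close>
definition Alex0 :: "nat \<Rightarrow> 'a::complete_space itself \<Rightarrow> bool" where
  "Alex0 n T \<longleftrightarrow> geodesic_space T \<and> curv_nonneg T \<and> hausdorff_dim (UNIV::'a set) = ereal (real n)"

definition affine_fun :: "('a::metric_space \<Rightarrow> real) \<Rightarrow> bool" where
  "affine_fun f \<longleftrightarrow> (\<forall>\<sigma> L. unit_segment \<sigma> L \<longrightarrow>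
     (\<forall>s\<in>{0..L}. \<forall>t\<in>{0..L}. \<forall>u\<in>{0..1}.
        f (\<sigma> ((1 - u) * s + u * t)) = (1 - u) * f (\<sigma> s) + u * f (\<sigma> t)))"

definition lipschitz_fun :: "('a::metric_space \<Rightarrow> real) \<Rightarrow> bool" where
  "lipschitz_fun f \<longleftrightarrow> (\<exists>C. \<forall>x y. \<bar>f x - f y\<bar> \<le> C * dist x y)"

definition lip_const :: "('a::metric_space \<Rightarrow> real) \<Rightarrow> real" where
  "lip_const f = Sup {\<bar>f x - f y\<bar> / dist x y | x y. x \<noteq> y}"

definition unit_line :: "(real \<Rightarrow> 'a::metric_space) \<Rightarrow> bool" where
  "unit_line \<gamma> \<longleftrightarrow> (\<forall>s t. dist (\<gamma> s) (\<gamma> t) = \<bar>s - t\<bar>)"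

end

theory Submission
  imports Defs "HOL-Real_Asymp.Real_Asymp"
begin

text \<open>Normalise \<open>f\<close> to a 1-Lipschitz affine \<open>g\<close> with \<open>g (\<gamma> t) = t\<close>. For every point \<open>p\<close>, the function
  \<open>t \<mapsto> d(p, \<gamma> t)\<^sup>2 - (t - g p)\<^sup>2\<close> is concave (curvature \<open>\<ge> 0\<close>) and nonnegative (\<open>g\<close> is 1-Lipschitz),
  hence constant: every point sees \<open>\<gamma>\<close> as in a Euclidean plane.
  Through every \<open>x\<close> there is a line along which \<open>g\<close> grows at unit speed. Its forward half is the
  limit of the geodesics from \<open>x\<close> to \<open>\<gamma> n\<close>, which are Cauchy as \<open>n \<rightarrow> \<infinity>\<close> by two comparison
  arguments involving a far point \<open>\<gamma> (-N)\<close>; its backward half is the forward half for \<open>-g\<close>.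
  Any two such gradient lines span a flat strip, so sliding every point along its gradient line
  to the level set \<open>g\<^sup>-\<^sup>1(0)\<close> splits off the factor \<open>\<real>\<close> isometrically.\<close>

lemma nonneg_concave_real_const:
  fixes \<phi> :: "real \<Rightarrow> real"
  assumes concave: "\<And>t1 t t2. t1 < t \<Longrightarrow> t < t2 \<Longrightarrow> (t2 - t1) * \<phi> t \<ge> (t2 - t) * \<phi> t1 + (t - t1) * \<phi> t2"
    and nonneg: "\<And>t. \<phi> t \<ge> 0"
  shows "\<phi> u = \<phi> v"
proof -
  have le: "\<phi> u \<le> \<phi> v" for u v
  proof (rule ccontr)
    assume less: "\<not> \<phi> u \<le> \<phi> v"
    \<comment> \<open>The chord through \<open>(u, \<phi> u)\<close> and \<open>(v, \<phi> v)\<close> becomes negative at some \<open>w\<close> beyond \<open>v\<close>,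
      but \<open>\<phi> w \<ge> 0\<close> would have to lie below it.\<close>
    show False
    proof (cases "u < v")
      case True
      define w where "w = max (v + 1) ((v * \<phi> u - u * \<phi> v) / (\<phi> u - \<phi> v) + 1)"
      have "v < w" "w > (v * \<phi> u - u * \<phi> v) / (\<phi> u - \<phi> v)" unfolding w_def by auto
      then have "w * (\<phi> u - \<phi> v) > v * \<phi> u - u * \<phi> v"
        using less by (simp add: divide_less_eq)
      moreover have "(w - u) * \<phi> v \<ge> (w - v) * \<phi> u + (v - u) * \<phi> w" using concave[OF True \<open>v < w\<close>] .
      moreover have "(v - u) * \<phi> w \<ge> 0" using nonneg True by simp
      ultimately show False by (simp add: algebra_simps)
    next
      case False
      then have "v < u" using less by (cases "u = v") auto
      define w where "w = min (v - 1) ((v * \<phi> u - u * \<phi> v) / (\<phi> u - \<phi> v) - 1)"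
      have "w < v" "w < (v * \<phi> u - u * \<phi> v) / (\<phi> u - \<phi> v)" unfolding w_def by auto
      then have "w * (\<phi> u - \<phi> v) < v * \<phi> u - u * \<phi> v"
        using less by (simp add: less_divide_eq)
      moreover have "(u - w) * \<phi> v \<ge> (u - v) * \<phi> w + (v - w) * \<phi> u" using concave[OF \<open>w < v\<close> \<open>v < u\<close>] .
      moreover have "(u - v) * \<phi> w \<ge> 0" using nonneg \<open>v < u\<close> by simp
      ultimately show False by (simp add: algebra_simps)
    qed
  qed
  show ?thesis using le[of u v] le[of v u] by simp
qed

lemma sqrt_sum_sq_le:
  fixes u K :: real
  assumes "0 < u" "0 \<le> K"
  shows "sqrt (u\<^sup>2 + K) \<le> u + K / (2 * u)"
proof -
  have "(u + K / (2 * u))\<^sup>2 = u\<^sup>2 + K + (K / (2 * u))\<^sup>2"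
    using assms by (simp add: power2_sum)
  then have "sqrt (u\<^sup>2 + K) \<le> sqrt ((u + K / (2 * u))\<^sup>2)" by simp
  also have "\<dots> = u + K / (2 * u)" using assms by simp
  finally show ?thesis .
qed

lemma Cauchy_of_sq_dist_le_sum:
  fixes Y :: "nat \<Rightarrow> 'a::metric_space"
  assumes E: "E \<longlonglongrightarrow> 0" and bound: "\<And>m n. m \<ge> M\<^sub>0 \<Longrightarrow> n \<ge> M\<^sub>0 \<Longrightarrow> (dist (Y m) (Y n))\<^sup>2 \<le> E m + E n"
  shows "Cauchy Y"
proof (rule metric_CauchyI)
  fix e :: real assume "e > 0"
  then have "e\<^sup>2 / 2 > 0" by simp
  then have "eventually (\<lambda>n. E n < e\<^sup>2 / 2) sequentially"
    using E order_tendsto_iff by blast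
  then obtain M where M: "\<And>n. n \<ge> M \<Longrightarrow> E n < e\<^sup>2 / 2"
    unfolding eventually_sequentially by blast
  show "\<exists>M. \<forall>m\<ge>M. \<forall>n\<ge>M. dist (Y m) (Y n) < e"
  proof (intro exI allI impI)
    fix m n assume "m \<ge> max M M\<^sub>0" "n \<ge> max M M\<^sub>0"
    then have "(dist (Y m) (Y n))\<^sup>2 < e\<^sup>2" using bound[of m n] M[of m] M[of n] by simp
    then show "dist (Y m) (Y n) < e" using \<open>e > 0\<close> by (simp add: power_less_imp_less_base)
  qed
qed

lemma unit_segment_dist:
  assumes "unit_segment \<sigma> L" "s \<in> {0..L}" "t \<in> {0..L}"
  shows "dist (\<sigma> s) (\<sigma> t) = \<bar>s - t\<bar>"
  using assms unfolding unit_segment_def by auto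

lemma unit_line_imp_unit_segment:
  assumes "unit_line \<eta>" "t1 \<le> t2"
  shows "unit_segment (\<lambda>u. \<eta> (t1 + u)) (t2 - t1)"
  using assms unfolding unit_line_def unit_segment_def by auto

lemma unit_line_reflect: "unit_line \<eta> \<Longrightarrow> unit_line (\<lambda>t. \<eta> (- t))"
  unfolding unit_line_def by (metis abs_minus_commute minus_diff_eq diff_minus_eq_add uminus_add_conv_diff)

lemma far_point_estimate_arith:
  fixes s \<Lambda> \<Lambda>' B c d \<delta> \<delta>' :: real
  assumes comparison: "(\<Lambda> - s) * d\<^sup>2 \<le> \<Lambda> * (2 * s * \<delta> + \<delta>\<^sup>2) + s * (\<Lambda>\<^sup>2 - c\<^sup>2)"
    and "0 \<le> s" "s < B" "B \<le> \<Lambda>" "\<Lambda> \<le> \<Lambda>'" "0 \<le> \<delta>" "\<delta> \<le> \<delta>'"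
  shows "d\<^sup>2 \<le> B / (B - s) * (2 * s * \<delta>' + \<delta>'\<^sup>2) + s * max 0 ((\<Lambda>'\<^sup>2 - c\<^sup>2) / (B - s))"
proof -
  have "d\<^sup>2 \<le> (\<Lambda> * (2 * s * \<delta> + \<delta>\<^sup>2) + s * (\<Lambda>\<^sup>2 - c\<^sup>2)) / (\<Lambda> - s)"
    using comparison assms by (simp add: pos_le_divide_eq mult.commute)
  also have "\<dots> = \<Lambda> / (\<Lambda> - s) * (2 * s * \<delta> + \<delta>\<^sup>2) + s * ((\<Lambda>\<^sup>2 - c\<^sup>2) / (\<Lambda> - s))"
    by (simp add: add_divide_distrib)
  also have "\<dots> \<le> B / (B - s) * (2 * s * \<delta>' + \<delta>'\<^sup>2) + s * max 0 ((\<Lambda>'\<^sup>2 - c\<^sup>2) / (B - s))"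
  proof (rule add_mono)
    have "B * s \<le> \<Lambda> * s" using assms by (intro mult_right_mono) auto
    then have "\<Lambda> / (\<Lambda> - s) \<le> B / (B - s)" using assms by (simp add: field_simps)
    moreover have "2 * s * \<delta> + \<delta>\<^sup>2 \<le> 2 * s * \<delta>' + \<delta>'\<^sup>2"
      using assms by (intro add_mono mult_left_mono power_mono) auto
    ultimately show "\<Lambda> / (\<Lambda> - s) * (2 * s * \<delta> + \<delta>\<^sup>2) \<le> B / (B - s) * (2 * s * \<delta>' + \<delta>'\<^sup>2)"
      using assms by (intro mult_mono) auto
    have "(\<Lambda>\<^sup>2 - c\<^sup>2) / (\<Lambda> - s) \<le> max 0 ((\<Lambda>'\<^sup>2 - c\<^sup>2) / (B - s))"
    proof (cases "\<Lambda>\<^sup>2 \<le> c\<^sup>2")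
      case True
      then have "(\<Lambda>\<^sup>2 - c\<^sup>2) / (\<Lambda> - s) \<le> 0" using assms by (intro divide_nonpos_pos) auto
      then show ?thesis by linarith
    next
      case False
      have "\<Lambda>\<^sup>2 \<le> \<Lambda>'\<^sup>2" using assms by (simp add: power_mono)
      then have "(\<Lambda>\<^sup>2 - c\<^sup>2) / (\<Lambda> - s) \<le> (\<Lambda>'\<^sup>2 - c\<^sup>2) / (\<Lambda> - s)"
        using assms by (simp add: divide_right_mono)
      also have "\<dots> \<le> (\<Lambda>'\<^sup>2 - c\<^sup>2) / (B - s)"
        using False \<open>\<Lambda>\<^sup>2 \<le> \<Lambda>'\<^sup>2\<close> assms by (intro divide_left_mono mult_pos_pos) linarith+
      finally show ?thesis by simp
    qed
    then show "s * ((\<Lambda>\<^sup>2 - c\<^sup>2) / (\<Lambda> - s)) \<le> s * max 0 ((\<Lambda>'\<^sup>2 - c\<^sup>2) / (B - s))"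
      using assms by (intro mult_left_mono) auto
  qed
  finally show ?thesis .
qed

text \<open>The right-hand side of \<open>far_point_estimate_arith\<close> in the situation of \<open>far_point_estimate\<close>
  below: \<open>a = g x\<close>, \<open>b = g y\<close>, \<open>b' = g y'\<close>, \<open>K\<close> is the squared distance from \<open>x\<close> to the line \<open>\<gamma>\<close>,
  \<open>L = d(x, \<gamma> n)\<close>, \<open>\<Lambda>'\<close> bounds \<open>d(y, \<gamma> (-N))\<close> and \<open>\<beta>\<close> bounds the excess of \<open>g\<close> over \<open>a\<close>
  at distance \<open>s\<close> from \<open>y\<close> towards \<open>\<gamma> (-N)\<close>.\<close>
definition far_point_bound :: "real \<Rightarrow> real \<Rightarrow> real \<Rightarrow> real \<Rightarrow> real \<Rightarrow> real \<Rightarrow> real \<Rightarrow> real \<Rightarrow> real" where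
  "far_point_bound a b b' s K L n N =
    (let \<Lambda>' = s + N + a + K / (2 * (N + a));
         \<beta> = s * (\<Lambda>' - b - N) / \<Lambda>';
         \<delta>' = sqrt (s * (K + 2 * \<beta> * (n - a)) / (L - s))
     in (N + b) / (N + b - s) * (2 * s * \<delta>' + \<delta>'\<^sup>2) + s * max 0 ((\<Lambda>'\<^sup>2 - (b' + N)\<^sup>2) / (N + b - s)))"

lemma far_point_bound_tendsto:
  assumes "b' \<le> a + s" "s < L" "0 \<le> s" "0 \<le> K"
  shows "((\<lambda>N. far_point_bound a b b' s K L n N) \<longlongrightarrow>
     2 * s * sqrt (s * K / (L - s)) + s * K / (L - s) + 2 * s * (s + a - b')) at_top"
proof -
  define \<Lambda>' where "\<Lambda>' N = s + N + a + K / (2 * (N + a))" for N :: real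
  have \<beta>: "((\<lambda>N. s * (\<Lambda>' N - b - N) / \<Lambda>' N) \<longlongrightarrow> 0) at_top"
    unfolding \<Lambda>'_def by real_asymp
  have \<delta>': "((\<lambda>N. sqrt (s * (K + 2 * (s * (\<Lambda>' N - b - N) / \<Lambda>' N) * (n - a)) / (L - s)))
      \<longlongrightarrow> sqrt (s * (K + 2 * 0 * (n - a)) / (L - s))) at_top"
    by (intro tendsto_intros \<beta>) (use assms in auto)
  have "((\<lambda>N::real. (N + b) / (N + b - s)) \<longlongrightarrow> 1) at_top" by real_asymp
  moreover have "((\<lambda>N. (\<Lambda>' N ^ 2 - (b' + N) ^ 2) / (N + b - s)) \<longlongrightarrow> 2 * (s + a - b')) at_top"
    unfolding \<Lambda>'_def by real_asymp
  ultimately have "((\<lambda>N. far_point_bound a b b' s K L n N) \<longlongrightarrow>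
     1 * (2 * s * sqrt (s * (K + 2 * 0 * (n - a)) / (L - s)) + (sqrt (s * (K + 2 * 0 * (n - a)) / (L - s)))\<^sup>2)
       + s * max 0 (2 * (s + a - b'))) at_top"
    unfolding far_point_bound_def Let_def \<Lambda>'_def[symmetric] by (intro tendsto_intros \<delta>')
  moreover have "s * K / (L - s) \<ge> 0" using assms by simp
  ultimately show ?thesis using assms by (simp add: max_def algebra_simps)
qed

locale alex_affine =
  fixes g :: "'a::complete_space \<Rightarrow> real"
  assumes geodesic: "geodesic_space TYPE('a)" and curv: "curv_nonneg TYPE('a)"
    and lipschitz: "\<And>x y. \<bar>g x - g y\<bar> \<le> dist x y" and affine: "affine_fun g"
begin

lemma curv_comparison:
  fixes \<sigma> :: "real \<Rightarrow> 'a"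
  assumes "unit_segment \<sigma> L" "0 \<le> t" "t \<le> L"
  shows "L * (dist p (\<sigma> t))\<^sup>2 \<ge> (L - t) * (dist p (\<sigma> 0))\<^sup>2 + t * (dist p (\<sigma> L))\<^sup>2 - t * (L - t) * L"
  using curv assms unfolding curv_nonneg_def by auto

lemma geodesicE:
  fixes x y :: 'a
  obtains \<sigma> where "unit_segment \<sigma> (dist x y)" "\<sigma> 0 = x" "\<sigma> (dist x y) = y"
  using geodesic unfolding geodesic_space_def by blast

lemma g_diff_le_dist: "g x - g y \<le> dist x y"
  using lipschitz[of x y] by simp

lemma g_diff_sq_le_dist_sq: "g x \<ge> g y \<Longrightarrow> (g x - g y)\<^sup>2 \<le> (dist x y)\<^sup>2"
  using g_diff_le_dist[of x y] by (simp add: power_mono)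

lemma tendsto_g: "(h \<longlongrightarrow> l) F \<Longrightarrow> ((\<lambda>n. g (h n)) \<longlongrightarrow> g l) F"
  by (rule metric_tendsto_imp_tendsto) (auto simp: dist_real_def lipschitz)

lemma g_on_segment:
  fixes \<sigma> :: "real \<Rightarrow> 'a"
  assumes "unit_segment \<sigma> L" "0 < L" "0 \<le> u" "u \<le> L"
  shows "g (\<sigma> u) = g (\<sigma> 0) + u / L * (g (\<sigma> L) - g (\<sigma> 0))"
proof -
  have "u / L \<in> {0..1}" "(1 - u / L) * 0 + (u / L) * L = u" using assms by auto
  then have "g (\<sigma> u) = (1 - u / L) * g (\<sigma> 0) + (u / L) * g (\<sigma> L)"
    using affine assms unfolding affine_fun_def unit_segment_def by (metis atLeastAtMost_iff order_refl)
  then show ?thesis by (simp add: algebra_simps)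
qed

lemma alex_affine_uminus: "alex_affine (\<lambda>x. - g x)"
  using geodesic curv lipschitz affine
  by unfold_locales (auto simp: affine_fun_def algebra_simps abs_minus_commute)

lemma dist_sq_to_line:
  fixes \<eta> :: "real \<Rightarrow> 'a"
  assumes line: "unit_line \<eta>" and g_line: "\<And>t. g (\<eta> t) = t + c"
  shows "\<exists>K\<ge>0. \<forall>t. (dist p (\<eta> t))\<^sup>2 = (t + c - g p)\<^sup>2 + K"
proof -
  define \<phi> where "\<phi> t = (dist p (\<eta> t))\<^sup>2 - (t + c - g p)\<^sup>2" for t
  have nonneg: "\<phi> t \<ge> 0" for t
    using g_diff_le_dist[of "\<eta> t" p] g_diff_le_dist[of p "\<eta> t"] g_line[of t]
    by (simp add: \<phi>_def abs_le_iff dist_commute flip: abs_le_square_iff)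
  have "(t2 - t1) * \<phi> t \<ge> (t2 - t) * \<phi> t1 + (t - t1) * \<phi> t2" if "t1 < t" "t < t2" for t1 t t2
  proof -
    have "(t2 - t1) * (dist p (\<eta> t))\<^sup>2 \<ge> (t2 - t) * (dist p (\<eta> t1))\<^sup>2
       + (t - t1) * (dist p (\<eta> t2))\<^sup>2 - (t - t1) * (t2 - t) * (t2 - t1)"
      using curv_comparison[OF unit_line_imp_unit_segment[OF line, of t1 t2], of "t - t1" p] that
      by simp
    moreover have "(t2 - t1) * (t + c - g p)\<^sup>2 = (t2 - t) * (t1 + c - g p)\<^sup>2
       + (t - t1) * (t2 + c - g p)\<^sup>2 - (t - t1) * (t2 - t) * (t2 - t1)"
      by (simp add: power2_eq_square algebra_simps)
    ultimately show ?thesis unfolding \<phi>_def by (simp add: algebra_simps)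
  qed
  then have "\<phi> t = \<phi> 0" for t using nonneg by (rule nonneg_concave_real_const)
  then show ?thesis using nonneg[of 0] unfolding \<phi>_def by (metis add.commute diff_add_cancel)
qed

lemma unit_line_of_dist_le:
  fixes \<eta> :: "real \<Rightarrow> 'a"
  assumes "\<And>t. g (\<eta> t) = t + c" "\<And>s t. dist (\<eta> s) (\<eta> t) \<le> \<bar>s - t\<bar>"
  shows "unit_line \<eta>"
  unfolding unit_line_def
proof (intro allI antisym)
  fix s t
  show "dist (\<eta> s) (\<eta> t) \<le> \<bar>s - t\<bar>" by (rule assms(2))
  show "\<bar>s - t\<bar> \<le> dist (\<eta> s) (\<eta> t)" using lipschitz[of "\<eta> s" "\<eta> t"] assms(1) by simp
qed

lemma dist_sq_between_lines:
  fixes \<eta>1 \<eta>2 :: "real \<Rightarrow> 'a"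
  assumes "unit_line \<eta>1" "\<And>t. g (\<eta>1 t) = t + c1" and "unit_line \<eta>2" "\<And>t. g (\<eta>2 t) = t + c2"
  shows "\<exists>K. \<forall>s t. (dist (\<eta>1 s) (\<eta>2 t))\<^sup>2 = (t + c2 - s - c1)\<^sup>2 + K"
proof -
  obtain K where K: "\<And>s. (dist (\<eta>2 0) (\<eta>1 s))\<^sup>2 = (s + c1 - g (\<eta>2 0))\<^sup>2 + K"
    using dist_sq_to_line[OF assms(1,2)] by blast
  have "(dist (\<eta>1 s) (\<eta>2 t))\<^sup>2 = (t + c2 - s - c1)\<^sup>2 + K" for s t
  proof -
    obtain K' where K': "\<And>t. (dist (\<eta>1 s) (\<eta>2 t))\<^sup>2 = (t + c2 - g (\<eta>1 s))\<^sup>2 + K'"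
      using dist_sq_to_line[OF assms(3,4)] by blast
    have "K' = K"
      using K'[of 0] K[of s] assms(2)[of s] assms(4)[of 0]
      by (simp add: dist_commute power2_eq_square algebra_simps)
    then show ?thesis using K'[of t] assms(2)[of s] by (simp add: algebra_simps)
  qed
  then show ?thesis by blast
qed

text \<open>Comparison in the triangle \<open>y, z, y'\<close>: \<open>d(y', \<rho> s)\<close> is bounded above through \<open>x\<close>, and
  \<open>d(y', z)\<close> below by the increase of \<open>g\<close>.\<close>
lemma far_point_comparison:
  fixes \<rho> :: "real \<Rightarrow> 'a"
  assumes \<rho>: "unit_segment \<rho> \<Lambda>" "\<rho> 0 = y" "\<rho> \<Lambda> = z" and s: "0 \<le> s" "s \<le> \<Lambda>"
    and "dist x y' = s" "g z \<le> g y'"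
  shows "(\<Lambda> - s) * (dist y y')\<^sup>2 \<le>
           \<Lambda> * (2 * s * dist (\<rho> s) x + (dist (\<rho> s) x)\<^sup>2) + s * (\<Lambda>\<^sup>2 - (g y' - g z)\<^sup>2)"
proof -
  have "dist y' (\<rho> s) \<le> s + dist (\<rho> s) x"
    using dist_triangle[of y' "\<rho> s" x] assms(6) by (simp add: dist_commute)
  then have "\<Lambda> * (dist y' (\<rho> s))\<^sup>2 \<le> \<Lambda> * (s + dist (\<rho> s) x)\<^sup>2"
    using s by (intro mult_left_mono power_mono) auto
  moreover have "s * (g y' - g z)\<^sup>2 \<le> s * (dist y' (\<rho> \<Lambda>))\<^sup>2"
    using g_diff_sq_le_dist_sq[of z y'] assms(7) \<rho>(3) s by (intro mult_left_mono) auto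
  moreover have "\<Lambda> * (dist y' (\<rho> s))\<^sup>2 \<ge> (\<Lambda> - s) * (dist y' (\<rho> 0))\<^sup>2 + s * (dist y' (\<rho> \<Lambda>))\<^sup>2 - s * (\<Lambda> - s) * \<Lambda>"
    using curv_comparison[OF \<rho>(1) s] .
  ultimately show ?thesis using \<rho>(2) by (simp add: dist_commute power2_eq_square algebra_simps)
qed

end

locale alex_affine_line = alex_affine +
  fixes \<gamma> :: "real \<Rightarrow> 'a::complete_space"
  assumes line: "unit_line \<gamma>" and g_line: "\<And>t. g (\<gamma> t) = t"
begin

definition line_sqdist :: "'a \<Rightarrow> real" where
  "line_sqdist x = (dist x (\<gamma> (g x)))\<^sup>2"

lemma line_sqdist_nonneg: "0 \<le> line_sqdist x"
  unfolding line_sqdist_def by simp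

lemma dist_line_sq: "(dist x (\<gamma> t))\<^sup>2 = (t - g x)\<^sup>2 + line_sqdist x"
proof -
  obtain K where "\<And>t. (dist x (\<gamma> t))\<^sup>2 = (t + 0 - g x)\<^sup>2 + K"
    using dist_sq_to_line[OF line, of 0 x] g_line by auto
  moreover from this[of "g x"] have "K = line_sqdist x" unfolding line_sqdist_def by simp
  ultimately show ?thesis by simp
qed

lemma dist_line_ge: "t - g x \<le> dist x (\<gamma> t)"
  using g_diff_le_dist[of "\<gamma> t" x] g_line by (simp add: dist_commute)

lemma dist_far_point_le:
  assumes "dist x y = s" "0 < N + g x"
  shows "dist y (\<gamma> (- N)) \<le> s + N + g x + line_sqdist x / (2 * (N + g x))"
proof -
  have "(dist x (\<gamma> (- N)))\<^sup>2 = (N + g x)\<^sup>2 + line_sqdist x"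
    using dist_line_sq[of x "- N"] by (simp add: power2_eq_square algebra_simps)
  then have "dist x (\<gamma> (- N)) = sqrt ((N + g x)\<^sup>2 + line_sqdist x)"
    by (metis real_sqrt_unique zero_le_dist)
  also have "\<dots> \<le> N + g x + line_sqdist x / (2 * (N + g x))"
    using assms(2) line_sqdist_nonneg by (rule sqrt_sum_sq_le)
  finally show ?thesis
    using dist_triangle[of y "\<gamma> (- N)" x] assms(1) by (simp add: dist_commute)
qed

lemma segment_to_line_length:
  assumes "unit_segment \<sigma> L" "\<sigma> 0 = x" "\<sigma> L = \<gamma> n"
  shows "L\<^sup>2 = (n - g x)\<^sup>2 + line_sqdist x"
proof -
  have "L = dist x (\<gamma> n)"
    using unit_segment_dist[OF assms(1), of 0 L] assms unfolding unit_segment_def by simp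
  then show ?thesis using dist_line_sq by simp
qed

text \<open>Comparison in the triangle \<open>x, \<gamma> n, w\<close>, with \<open>d(w, \<gamma> n)\<close> bounded below by the increase of \<open>g\<close>.\<close>
lemma near_point_comparison:
  fixes \<sigma> :: "real \<Rightarrow> 'a"
  assumes \<sigma>: "unit_segment \<sigma> L" "\<sigma> 0 = x" "\<sigma> L = \<gamma> n" and s: "0 \<le> s" "s < L"
    and "dist w (\<sigma> s) = s" "g w - g x \<le> \<beta>" "0 \<le> \<beta>" "g x + 2 * s \<le> n"
  shows "(L - s) * (dist w x)\<^sup>2 \<le> s * (line_sqdist x + 2 * \<beta> * (n - g x))"
proof -
  have "dist x (\<sigma> s) = s" using unit_segment_dist[OF \<sigma>(1), of 0 s] \<sigma>(2) s by simp
  then have gw: "g w \<le> g x + 2 * s"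
    using g_diff_le_dist[of w "\<sigma> s"] g_diff_le_dist[of "\<sigma> s" x] assms(6) by (simp add: dist_commute)
  have "L * (dist w (\<sigma> s))\<^sup>2 \<ge> (L - s) * (dist w (\<sigma> 0))\<^sup>2 + s * (dist w (\<sigma> L))\<^sup>2 - s * (L - s) * L"
    using curv_comparison[OF \<sigma>(1)] s by simp
  moreover have "(n - g w)\<^sup>2 \<le> (dist w (\<sigma> L))\<^sup>2"
    using g_diff_le_dist[of "\<gamma> n" w] \<sigma>(3) g_line gw assms(9)
    by (intro power_mono) (auto simp: dist_commute)
  then have "s * (n - g w)\<^sup>2 \<le> s * (dist w (\<sigma> L))\<^sup>2"
    using s by (intro mult_left_mono) auto
  ultimately have "(L - s) * (dist w x)\<^sup>2 \<le> s * (L\<^sup>2 - (n - g w)\<^sup>2)"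
    using assms(6) \<sigma>(2) by (simp add: power2_eq_square algebra_simps)
  also have "\<dots> = s * (line_sqdist x + (g w - g x) * (2 * n - g x - g w))"
    unfolding segment_to_line_length[OF \<sigma>] by (simp add: power2_eq_square algebra_simps)
  also have "\<dots> \<le> s * (line_sqdist x + 2 * \<beta> * (n - g x))"
  proof -
    have "(g w - g x) * (2 * n - g x - g w) \<le> 2 * \<beta> * (n - g x)"
    proof (cases "g x \<le> g w")
      case True
      then have "(g w - g x) * (2 * n - g x - g w) \<le> \<beta> * (2 * (n - g x))"
        using gw assms(7,9) s by (intro mult_mono) auto
      then show ?thesis by (simp add: algebra_simps)
    next
      case False
      then have "(g w - g x) * (2 * n - g x - g w) \<le> 0"
        using gw assms(9) s by (intro mult_nonpos_nonneg) auto
      also have "0 \<le> 2 * \<beta> * (n - g x)" using assms(8,9) s by simp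
      finally show ?thesis .
    qed
    then show ?thesis using s by (simp add: mult_left_mono)
  qed
  finally show ?thesis .
qed

lemma g_toward_far_point_le:
  fixes \<rho> :: "real \<Rightarrow> 'a"
  assumes \<rho>: "unit_segment \<rho> \<Lambda>" "\<rho> 0 = y" "\<rho> \<Lambda> = \<gamma> (- N)"
    and "\<Lambda> \<le> \<Lambda>'" "g y \<le> g x + s" "0 \<le> s" "s < N + g y"
  shows "g (\<rho> s) - g x \<le> s * (\<Lambda>' - g y - N) / \<Lambda>'"
proof -
  have "\<Lambda> = dist y (\<gamma> (- N))" using unit_segment_dist[OF \<rho>(1), of 0 \<Lambda>] \<rho> unfolding unit_segment_def by simp
  then have "s < \<Lambda>" using g_diff_le_dist[of y "\<gamma> (- N)"] g_line assms(7) by simp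
  have "g (\<rho> s) = g y - s * (g y + N) / \<Lambda>"
    using g_on_segment[OF \<rho>(1), of s] \<rho>(2,3) g_line \<open>s < \<Lambda>\<close> assms(6) by (simp add: field_simps)
  moreover have "s * (g y + N) / \<Lambda>' \<le> s * (g y + N) / \<Lambda>"
    using assms(4,6,7) \<open>s < \<Lambda>\<close> by (intro divide_left_mono) auto
  ultimately have "g (\<rho> s) - g x \<le> s - s * (g y + N) / \<Lambda>'" using assms(5) by linarith
  also have "\<dots> = s * (\<Lambda>' - g y - N) / \<Lambda>'"
    using assms(4,6) \<open>s < \<Lambda>\<close> by (simp add: field_simps)
  finally show ?thesis .
qed

lemma far_point_estimate:
  fixes \<sigma> :: "real \<Rightarrow> 'a"
  assumes \<sigma>: "unit_segment \<sigma> L" "\<sigma> 0 = x" "\<sigma> L = \<gamma> n" and s: "0 \<le> s" "s < L"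
    and "g x + 2 * s \<le> n" "dist x y' = s"
    and N: "0 < N + g x" "s < N + g (\<sigma> s)" "0 \<le> g y' + N"
  shows "(dist (\<sigma> s) y')\<^sup>2 \<le> far_point_bound (g x) (g (\<sigma> s)) (g y') s (line_sqdist x) L n N"
proof -
  define y where "y = \<sigma> s"
  define K where "K = line_sqdist x"
  define \<Lambda>' where "\<Lambda>' = s + N + g x + K / (2 * (N + g x))"
  define \<beta> where "\<beta> = s * (\<Lambda>' - g y - N) / \<Lambda>'"
  obtain \<rho> where \<rho>: "unit_segment \<rho> (dist y (\<gamma> (- N)))" "\<rho> 0 = y" "\<rho> (dist y (\<gamma> (- N))) = \<gamma> (- N)"
    by (rule geodesicE)
  define \<Lambda> where "\<Lambda> = dist y (\<gamma> (- N))"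
  have "dist x y = s" using unit_segment_dist[OF \<sigma>(1), of 0 s] \<sigma>(2) s y_def by simp
  then have gy: "g y \<le> g x + s" using g_diff_le_dist[of y x] by (simp add: dist_commute)
  have \<Lambda>_ge: "N + g y \<le> \<Lambda>" using g_diff_le_dist[of y "\<gamma> (- N)"] g_line \<Lambda>_def by simp
  have \<Lambda>_le: "\<Lambda> \<le> \<Lambda>'"
    using dist_far_point_le[OF \<open>dist x y = s\<close> N(1)] unfolding \<Lambda>_def \<Lambda>'_def K_def .
  have "s < \<Lambda>" using \<Lambda>_ge N(2) y_def by simp
  have "0 \<le> K / (2 * (N + g x))" using N(1) line_sqdist_nonneg K_def by simp
  then have "0 \<le> \<beta>" using gy s \<open>s < \<Lambda>\<close> \<Lambda>_le unfolding \<beta>_def \<Lambda>'_def by simp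
  have "g (\<rho> s) - g x \<le> \<beta>"
    using g_toward_far_point_le[OF \<rho> _ gy s(1)] \<Lambda>_le N(2) y_def unfolding \<Lambda>_def \<beta>_def by simp
  moreover have "dist (\<rho> s) y = s"
    using unit_segment_dist[OF \<rho>(1), of s 0] \<rho>(2) s \<open>s < \<Lambda>\<close> unfolding \<Lambda>_def by simp
  ultimately have "(L - s) * (dist (\<rho> s) x)\<^sup>2 \<le> s * (K + 2 * \<beta> * (n - g x))"
    using near_point_comparison[OF \<sigma> s] \<open>0 \<le> \<beta>\<close> assms(6) unfolding K_def y_def by blast
  then have "dist (\<rho> s) x \<le> sqrt (s * (K + 2 * \<beta> * (n - g x)) / (L - s))"
    using s by (simp add: real_le_rsqrt pos_le_divide_eq mult.commute)
  moreover have "(\<Lambda> - s) * (dist y y')\<^sup>2 \<le>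
      \<Lambda> * (2 * s * dist (\<rho> s) x + (dist (\<rho> s) x)\<^sup>2) + s * (\<Lambda>\<^sup>2 - (g y' + N)\<^sup>2)"
    using far_point_comparison[OF \<rho>, of s x y'] s \<open>s < \<Lambda>\<close> assms(7) N(3) g_line
    unfolding \<Lambda>_def by simp
  ultimately have "(dist y y')\<^sup>2 \<le> (N + g y) / (N + g y - s) *
      (2 * s * sqrt (s * (K + 2 * \<beta> * (n - g x)) / (L - s)) + (sqrt (s * (K + 2 * \<beta> * (n - g x)) / (L - s)))\<^sup>2)
      + s * max 0 ((\<Lambda>'\<^sup>2 - (g y' + N)\<^sup>2) / (N + g y - s))"
    using s N(2) \<Lambda>_ge \<Lambda>_le y_def by (intro far_point_estimate_arith) auto
  then show ?thesis
    unfolding far_point_bound_def Let_def \<beta>_def \<Lambda>'_def K_def y_def .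
qed

text \<open>Let the far point \<open>\<gamma> (-N)\<close> recede: as \<open>N \<rightarrow> \<infinity>\<close>, the excess \<open>\<beta>\<close> and the defect of
  \<open>d(y, \<gamma> (-N))\<close> from \<open>N + g y\<close> vanish.\<close>
lemma dist_sq_to_segment_point_le:
  fixes \<sigma> :: "real \<Rightarrow> 'a"
  assumes \<sigma>: "unit_segment \<sigma> L" "\<sigma> 0 = x" "\<sigma> L = \<gamma> n" and s: "0 \<le> s" "s < L"
    and "g x + 2 * s \<le> n" "dist x y' = s"
  shows "(dist (\<sigma> s) y')\<^sup>2 \<le> 2 * s * sqrt (s * line_sqdist x / (L - s)) + s * line_sqdist x / (L - s)
           + 2 * s * (s + g x - g y')"
proof (rule tendsto_le[OF _ far_point_bound_tendsto tendsto_const])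
  show "g y' \<le> g x + s" using g_diff_le_dist[of y' x] assms(7) by (simp add: dist_commute)
  have "eventually (\<lambda>N. N \<ge> \<bar>g x\<bar> + \<bar>g (\<sigma> s)\<bar> + \<bar>g y'\<bar> + s + 1) at_top"
    by (rule eventually_ge_at_top)
  then show "eventually (\<lambda>N. (dist (\<sigma> s) y')\<^sup>2
      \<le> far_point_bound (g x) (g (\<sigma> s)) (g y') s (line_sqdist x) L n N) at_top"
    by eventually_elim (rule far_point_estimate[OF assms], use s in auto)
qed (use s line_sqdist_nonneg in auto)

definition segment_to :: "'a \<Rightarrow> nat \<Rightarrow> real \<Rightarrow> 'a" where
  "segment_to x n = (SOME \<sigma>. unit_segment \<sigma> (dist x (\<gamma> (real n))) \<and> \<sigma> 0 = x \<and> \<sigma> (dist x (\<gamma> (real n))) = \<gamma> (real n))"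

lemma segment_to:
  "unit_segment (segment_to x n) (dist x (\<gamma> (real n)))"
  "segment_to x n 0 = x" "segment_to x n (dist x (\<gamma> (real n))) = \<gamma> (real n)"
proof -
  obtain \<sigma> where "unit_segment \<sigma> (dist x (\<gamma> (real n)))" "\<sigma> 0 = x" "\<sigma> (dist x (\<gamma> (real n))) = \<gamma> (real n)"
    by (rule geodesicE)
  then have "unit_segment (segment_to x n) (dist x (\<gamma> (real n))) \<and> segment_to x n 0 = x
      \<and> segment_to x n (dist x (\<gamma> (real n))) = \<gamma> (real n)"
    unfolding segment_to_def by (rule someI[where x = \<sigma>, OF conjI[OF _ conjI]])
  then show "unit_segment (segment_to x n) (dist x (\<gamma> (real n)))"
    "segment_to x n 0 = x" "segment_to x n (dist x (\<gamma> (real n))) = \<gamma> (real n)" by auto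
qed

lemma dist_segment_to:
  "s \<in> {0..dist x (\<gamma> (real n))} \<Longrightarrow> t \<in> {0..dist x (\<gamma> (real n))} \<Longrightarrow>
     dist (segment_to x n s) (segment_to x n t) = \<bar>s - t\<bar>"
  using segment_to(1) by (rule unit_segment_dist)

lemma g_segment_to:
  assumes "0 \<le> s" "s \<le> dist x (\<gamma> (real n))" "0 < dist x (\<gamma> (real n))"
  shows "g (segment_to x n s) = g x + s / dist x (\<gamma> (real n)) * (real n - g x)"
  using g_on_segment[OF segment_to(1) assms(3,1,2)] segment_to(2,3) g_line by simp

lemma g_segment_to_deficit:
  assumes "g x < real n" "0 \<le> s" "s \<le> dist x (\<gamma> (real n))"
  shows "g x + s - g (segment_to x n s) \<le> s * sqrt (line_sqdist x) / (real n - g x)"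
proof -
  define L where "L = dist x (\<gamma> (real n))"
  define H where "H = sqrt (line_sqdist x)"
  have "real n - g x \<le> L" using dist_line_ge unfolding L_def .
  then have "0 < L" using assms(1) by simp
  have "0 \<le> H" "H\<^sup>2 = line_sqdist x" unfolding H_def using line_sqdist_nonneg by auto
  have "L\<^sup>2 = (real n - g x)\<^sup>2 + H\<^sup>2"
    using dist_line_sq[of x "real n"] \<open>H\<^sup>2 = line_sqdist x\<close> unfolding L_def by simp
  also have "\<dots> \<le> (real n - g x + H)\<^sup>2"
    using assms(1) \<open>0 \<le> H\<close> unfolding power2_sum by simp
  finally have "L - (real n - g x) \<le> H"
    using assms(1) \<open>0 \<le> H\<close> power2_le_imp_le by fastforce
  have "g x + s - g (segment_to x n s) = s * (L - (real n - g x)) / L"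
    using g_segment_to[OF assms(2,3)] \<open>0 < L\<close> unfolding L_def by (simp add: field_simps)
  also have "\<dots> \<le> s * H / L"
    using \<open>L - (real n - g x) \<le> H\<close> assms(2) \<open>0 < L\<close> by (intro divide_right_mono mult_left_mono) auto
  also have "\<dots> \<le> s * H / (real n - g x)"
    using \<open>real n - g x \<le> L\<close> assms \<open>0 \<le> H\<close> by (intro frac_le) auto
  finally show ?thesis unfolding H_def .
qed

lemma dist_sq_segment_to_le:
  assumes s: "0 \<le> s" and m: "g x + 2 * s + 1 \<le> real m" and n: "g x + 2 * s + 1 \<le> real n"
  shows "(dist (segment_to x m s) (segment_to x n s))\<^sup>2 \<le>
    2 * s * sqrt (s * line_sqdist x / (real m - g x - s)) + s * line_sqdist x / (real m - g x - s)
      + 2 * s * (s * sqrt (line_sqdist x) / (real n - g x))"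
proof -
  define L where "L = dist x (\<gamma> (real m))"
  have "real m - g x \<le> L" "s \<le> dist x (\<gamma> (real n))"
    using dist_line_ge[of "real m" x] dist_line_ge[of "real n" x] n s unfolding L_def by auto
  then have "s < L" using m s by linarith
  have "dist x (segment_to x n s) = s"
    using dist_segment_to[of 0 x n s] segment_to(2) s \<open>s \<le> dist x (\<gamma> (real n))\<close> by simp
  then have "(dist (segment_to x m s) (segment_to x n s))\<^sup>2 \<le> 2 * s * sqrt (s * line_sqdist x / (L - s))
      + s * line_sqdist x / (L - s) + 2 * s * (s + g x - g (segment_to x n s))"
    using dist_sq_to_segment_point_le[OF segment_to(1-3)[of x m] s] \<open>s < L\<close> m
    unfolding L_def by simp
  also have "\<dots> \<le> 2 * s * sqrt (s * line_sqdist x / (real m - g x - s)) + s * line_sqdist x / (real m - g x - s)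
      + 2 * s * (s * sqrt (line_sqdist x) / (real n - g x))"
  proof -
    have "s * line_sqdist x / (L - s) \<le> s * line_sqdist x / (real m - g x - s)"
      using \<open>real m - g x \<le> L\<close> m s line_sqdist_nonneg by (intro frac_le) auto
    moreover have "s + g x - g (segment_to x n s) \<le> s * sqrt (line_sqdist x) / (real n - g x)"
      using g_segment_to_deficit[of x n s] n s \<open>s \<le> dist x (\<gamma> (real n))\<close> by (simp add: algebra_simps)
    ultimately show ?thesis using s by (intro add_mono mult_left_mono real_sqrt_le_mono) auto
  qed
  finally show ?thesis .
qed

lemma segment_to_Cauchy:
  assumes s: "0 \<le> s"
  shows "Cauchy (\<lambda>n. segment_to x n s)"
proof (rule Cauchy_of_sq_dist_le_sum)
  define a where "a = g x"
  define K where "K = line_sqdist x"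
  define E where "E n = 2 * s * sqrt (s * K / (real n - a - s)) + s * K / (real n - a - s)
      + 2 * s * (s * sqrt K / (real n - a))" for n
  have "(\<lambda>n. s * K / (real n - a - s)) \<longlonglongrightarrow> 0" "(\<lambda>n. s * sqrt K / (real n - a)) \<longlonglongrightarrow> 0"
    by real_asymp+
  then have "E \<longlonglongrightarrow> 2 * s * sqrt 0 + 0 + 2 * s * 0"
    unfolding E_def by (intro tendsto_intros)
  then show "E \<longlonglongrightarrow> 0" by simp
  show "(dist (segment_to x m s) (segment_to x n s))\<^sup>2 \<le> E m + E n"
    if "m \<ge> nat \<lceil>a + 2 * s + 1\<rceil>" "n \<ge> nat \<lceil>a + 2 * s + 1\<rceil>" for m n
  proof -
    have m: "a + 2 * s + 1 \<le> real m" and n: "a + 2 * s + 1 \<le> real n" using that by linarith+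
    then have "0 \<le> 2 * s * sqrt (s * K / (real n - a - s)) + s * K / (real n - a - s)"
      "0 \<le> 2 * s * (s * sqrt K / (real m - a))"
      using s line_sqdist_nonneg unfolding K_def by simp_all
    then show ?thesis
      using dist_sq_segment_to_le[OF s, of x m n] m n unfolding E_def K_def a_def by linarith
  qed
qed

definition ray :: "'a \<Rightarrow> real \<Rightarrow> 'a" where
  "ray x s = lim (\<lambda>n. segment_to x n s)"

lemma segment_to_tendsto_ray: "0 \<le> s \<Longrightarrow> (\<lambda>n. segment_to x n s) \<longlonglongrightarrow> ray x s"
  unfolding ray_def using segment_to_Cauchy by (simp add: Cauchy_convergent_iff convergent_LIMSEQ_iff)

lemma eventually_segment_to_length_gt: "eventually (\<lambda>n. s < dist x (\<gamma> (real n))) sequentially"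
proof (rule eventually_sequentiallyI)
  fix n assume "nat \<lceil>g x + s + 1\<rceil> \<le> n"
  then show "s < dist x (\<gamma> (real n))" using dist_line_ge[of "real n" x] by linarith
qed

lemma ray_0: "ray x 0 = x"
  using segment_to_tendsto_ray[of 0 x] segment_to(2) by (simp add: LIMSEQ_const_iff)

lemma g_ray:
  assumes "0 \<le> s"
  shows "g (ray x s) = g x + s"
proof -
  define a where "a = g x"
  define K where "K = line_sqdist x"
  have "(\<lambda>n. a + s / sqrt ((real n - a)\<^sup>2 + K) * (real n - a)) \<longlonglongrightarrow> a + s"
    by real_asymp
  moreover have "eventually (\<lambda>n. a + s / sqrt ((real n - a)\<^sup>2 + K) * (real n - a)
      = g (segment_to x n s)) sequentially"
    using eventually_segment_to_length_gt[of s x]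
  proof eventually_elim
    case (elim n)
    have "dist x (\<gamma> (real n)) = sqrt ((real n - a)\<^sup>2 + K)"
      using dist_line_sq[of x "real n"] unfolding a_def K_def by (metis real_sqrt_unique zero_le_dist)
    moreover have "0 < dist x (\<gamma> (real n))" using elim assms by linarith
    ultimately show ?case using g_segment_to[of s x n] elim assms unfolding a_def by simp
  qed
  ultimately have "(\<lambda>n. g (segment_to x n s)) \<longlonglongrightarrow> a + s" by (rule Lim_transform_eventually)
  then show ?thesis
    using tendsto_g[OF segment_to_tendsto_ray[OF assms]] LIMSEQ_unique unfolding a_def by blast
qed

lemma dist_ray:
  assumes "0 \<le> s" "0 \<le> t"
  shows "dist (ray x s) (ray x t) = \<bar>s - t\<bar>"
proof -
  have "eventually (\<lambda>n. \<bar>s - t\<bar> = dist (segment_to x n s) (segment_to x n t)) sequentially"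
    using eventually_segment_to_length_gt[of s x] eventually_segment_to_length_gt[of t x]
    by eventually_elim (use dist_segment_to assms in auto)
  then have "(\<lambda>n. dist (segment_to x n s) (segment_to x n t)) \<longlonglongrightarrow> \<bar>s - t\<bar>"
    by (rule Lim_transform_eventually[OF tendsto_const])
  moreover have "(\<lambda>n. dist (segment_to x n s) (segment_to x n t)) \<longlonglongrightarrow> dist (ray x s) (ray x t)"
    using segment_to_tendsto_ray assms by (intro tendsto_intros)
  ultimately show ?thesis using LIMSEQ_unique by blast
qed

lemma gradient_line_exists: "\<exists>\<eta>. unit_line \<eta> \<and> \<eta> 0 = x \<and> (\<forall>t. g (\<eta> t) = t + g x)"
proof -
  interpret neg: alex_affine_line "\<lambda>x. - g x" "\<lambda>t. \<gamma> (- t)"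
    unfolding alex_affine_line_def alex_affine_line_axioms_def
    using alex_affine_uminus unit_line_reflect[OF line] g_line by simp
  define \<eta> where "\<eta> t = (if 0 \<le> t then ray x t else neg.ray x (- t))" for t
  have g_\<eta>: "g (\<eta> t) = t + g x" for t
    using g_ray[of t x] neg.g_ray[of "- t" x] unfolding \<eta>_def by auto
  have dist_le: "dist (\<eta> s) (\<eta> t) \<le> \<bar>s - t\<bar>" if "s \<le> t" for s t
  proof (cases "0 \<le> s")
    case True
    then show ?thesis using dist_ray[of s t x] that unfolding \<eta>_def by simp
  next
    case False
    show ?thesis
    proof (cases "0 \<le> t")
      case True
      have "dist (\<eta> s) (\<eta> t) \<le> dist (\<eta> s) x + dist x (\<eta> t)" by (rule dist_triangle)
      also have "\<dots> = - s + t"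
        using neg.dist_ray[of "- s" 0 x] dist_ray[of 0 t x] ray_0 neg.ray_0 False True
        unfolding \<eta>_def by (simp add: dist_commute)
      finally show ?thesis by simp
    next
      case False
      then show ?thesis using neg.dist_ray[of "- s" "- t" x] \<open>\<not> 0 \<le> s\<close> unfolding \<eta>_def by simp
    qed
  qed
  have "dist (\<eta> s) (\<eta> t) \<le> \<bar>s - t\<bar>" for s t
    using dist_le[of s t] dist_le[of t s] by (cases "s \<le> t") (auto simp: dist_commute abs_minus_commute)
  then have "unit_line \<eta>" using g_\<eta> by (intro unit_line_of_dist_le)
  moreover have "\<eta> 0 = x" using ray_0 unfolding \<eta>_def by simp
  ultimately show ?thesis using g_\<eta> by blast
qed

definition gradient_line :: "'a \<Rightarrow> real \<Rightarrow> 'a" where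
  "gradient_line x = (SOME \<eta>. unit_line \<eta> \<and> \<eta> 0 = x \<and> (\<forall>t. g (\<eta> t) = t + g x))"

lemma gradient_line:
  "unit_line (gradient_line x)" "gradient_line x 0 = x" "g (gradient_line x t) = t + g x"
  using someI_ex[OF gradient_line_exists[of x]] unfolding gradient_line_def by auto

definition level_proj :: "'a \<Rightarrow> 'a" where
  "level_proj x = gradient_line x (- g x)"

lemma dist_sq_gradient_lines:
  "\<exists>K. \<forall>s t. (dist (gradient_line x s) (gradient_line y t))\<^sup>2 = (t + g y - s - g x)\<^sup>2 + K"
  using dist_sq_between_lines[of "gradient_line x" "g x" "gradient_line y" "g y"] gradient_line(1,3) by blast

lemma dist_eq_product_dist:
  "dist x y = sqrt ((dist (level_proj x) (level_proj y))\<^sup>2 + (g x - g y)\<^sup>2)"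
proof -
  obtain K where K: "\<And>s t. (dist (gradient_line x s) (gradient_line y t))\<^sup>2 = (t + g y - s - g x)\<^sup>2 + K"
    using dist_sq_gradient_lines[of x y] by blast
  have "(dist x y)\<^sup>2 = (g y - g x)\<^sup>2 + K" using K[of 0 0] gradient_line(2) by simp
  moreover have "(dist (level_proj x) (level_proj y))\<^sup>2 = K" using K[of "- g x" "- g y"] unfolding level_proj_def by simp
  ultimately have "(dist x y)\<^sup>2 = (dist (level_proj x) (level_proj y))\<^sup>2 + (g x - g y)\<^sup>2"
    by (simp add: power2_commute)
  then show ?thesis by (metis real_sqrt_unique zero_le_dist)
qed

lemma level_proj_gradient_line:
  assumes "g z = 0"
  shows "level_proj (gradient_line z t) = z"
proof -
  define x where "x = gradient_line z t"
  obtain K where K: "\<And>u v. (dist (gradient_line x u) (gradient_line z v))\<^sup>2 = (v + g z - u - g x)\<^sup>2 + K"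
    using dist_sq_gradient_lines[of x z] by blast
  have "g x = t" using gradient_line(3) assms unfolding x_def by simp
  then have "K = 0" using K[of 0 t] gradient_line(2) assms unfolding x_def by simp
  then have "dist (gradient_line x (- g x)) (gradient_line z 0) = 0" using K[of "- g x" 0] assms by simp
  then show ?thesis using gradient_line(2) unfolding level_proj_def x_def by simp
qed

theorem isometric_splitting:
  "bij_betw (\<lambda>x. (level_proj x, g x)) UNIV ({z. g z = 0} \<times> UNIV)"
proof (rule bij_betw_imageI)
  show "inj (\<lambda>x. (level_proj x, g x))"
  proof (rule injI)
    fix x y assume "(level_proj x, g x) = (level_proj y, g y)"
    then have "dist x y = 0" using dist_eq_product_dist[of x y] by simp
    then show "x = y" by simp
  qed
  show "range (\<lambda>x. (level_proj x, g x)) = {z. g z = 0} \<times> UNIV"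
  proof (intro equalityI subsetI)
    fix p assume "p \<in> {z. g z = 0} \<times> (UNIV :: real set)"
    then obtain z t where "p = (z, t)" "g z = 0" by auto
    then have "p = (level_proj (gradient_line z t), g (gradient_line z t))"
      using level_proj_gradient_line gradient_line(3) by simp
    then show "p \<in> range (\<lambda>x. (level_proj x, g x))" by blast
  qed (use gradient_line(3) in \<open>auto simp: level_proj_def\<close>)
qed

corollary product_decomposition:
  "\<exists>(Z::'a set) \<Phi>. bij_betw \<Phi> UNIV (Z \<times> (UNIV :: real set)) \<and>
     (\<forall>x y. dist x y = sqrt ((dist (fst (\<Phi> x)) (fst (\<Phi> y)))\<^sup>2 + (snd (\<Phi> x) - snd (\<Phi> y))\<^sup>2)) \<and>
     (\<forall>x. snd (\<Phi> x) = g x)"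
proof (intro exI conjI allI)
  show "bij_betw (\<lambda>x. (level_proj x, g x)) UNIV ({z. g z = 0} \<times> UNIV)"
    by (rule isometric_splitting)
  show "dist x y = sqrt ((dist (fst (level_proj x, g x)) (fst (level_proj y, g y)))\<^sup>2
      + (snd (level_proj x, g x) - snd (level_proj y, g y))\<^sup>2)" for x y
    unfolding fst_conv snd_conv by (rule dist_eq_product_dist)
qed simp

end

lemma abs_diff_le_lip_const:
  assumes "lipschitz_fun f"
  shows "\<bar>f x - f y\<bar> \<le> lip_const f * dist x y"
proof (cases "x = y")
  case False
  obtain C where "\<And>x y. \<bar>f x - f y\<bar> \<le> C * dist x y"
    using assms unfolding lipschitz_fun_def by blast
  then have "bdd_above {\<bar>f x - f y\<bar> / dist x y | x y. x \<noteq> y}"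
    by (auto intro!: bdd_aboveI[of _ C] simp: divide_le_eq)
  then have "\<bar>f x - f y\<bar> / dist x y \<le> lip_const f"
    unfolding lip_const_def using False by (auto intro: cSup_upper)
  then show ?thesis using False by (simp add: divide_le_eq mult.commute)
qed simp

lemma has_real_derivative_const_imp_linear:
  fixes h :: "real \<Rightarrow> real"
  assumes "\<And>t. (h has_real_derivative c) (at t)"
  shows "h t = h 0 + c * t"
proof -
  have "((\<lambda>t. h t - c * t) has_real_derivative c - c) (at u)" for u
    using assms by (intro derivative_intros) auto
  then have "((\<lambda>t. h t - c * t) has_real_derivative 0) (at u)" for u by simp
  then have "h t - c * t = h 0 - c * 0" using DERIV_isconst_all[of "\<lambda>t. h t - c * t" t 0] by blast
  then show ?thesis by simp
qed

lemma alex_affine_line_rescaled: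
  fixes f :: "'a::complete_space \<Rightarrow> real"
  assumes "Alex0 n TYPE('a)" "lipschitz_fun f" "affine_fun f" "unit_line \<gamma>"
    and "\<forall>t. ((\<lambda>t. f (\<gamma> t)) has_real_derivative lip_const f) (at t)" "lip_const f > 0"
  shows "alex_affine_line (\<lambda>x. f x / lip_const f) (\<lambda>t. \<gamma> (t - f (\<gamma> 0) / lip_const f))"
proof -
  define c where "c = lip_const f"
  have "c > 0" using assms(6) unfolding c_def .
  have f_\<gamma>: "f (\<gamma> t) = f (\<gamma> 0) + c * t" for t
    using assms(5) unfolding c_def by (intro has_real_derivative_const_imp_linear) simp
  have "\<bar>f x / c - f y / c\<bar> \<le> dist x y" for x y
  proof -
    have "\<bar>f x / c - f y / c\<bar> = \<bar>f x - f y\<bar> / c"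
      using \<open>c > 0\<close> by (simp add: diff_divide_distrib[symmetric])
    also have "\<dots> \<le> dist x y"
      using abs_diff_le_lip_const[OF assms(2), of x y] \<open>c > 0\<close>
      unfolding c_def by (simp add: divide_le_eq mult.commute)
    finally show ?thesis .
  qed
  moreover have "affine_fun (\<lambda>x. f x / c)"
    using assms(3) \<open>c > 0\<close> unfolding affine_fun_def by (simp add: field_simps)
  moreover have "unit_line (\<lambda>t. \<gamma> (t - f (\<gamma> 0) / c))" using assms(4) unfolding unit_line_def by simp
  moreover have "f (\<gamma> (t - f (\<gamma> 0) / c)) / c = t" for t
    using f_\<gamma>[of "t - f (\<gamma> 0) / c"] \<open>c > 0\<close> by (simp add: field_simps)
  moreover have "geodesic_space TYPE('a)" "curv_nonneg TYPE('a)"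
    using assms(1) unfolding Alex0_def by auto
  ultimately show ?thesis unfolding c_def
    by (intro alex_affine_line.intro alex_affine.intro alex_affine_line_axioms.intro)
qed

theorem lemma4p1:
  fixes f :: "'a::complete_space \<Rightarrow> real" and n :: nat and \<gamma> :: "real \<Rightarrow> 'a"
  assumes "Alex0 n TYPE('a)"
    and "lipschitz_fun f" and "affine_fun f"
    and "unit_line \<gamma>"
    and "\<forall>t. ((\<lambda>t. f (\<gamma> t)) has_real_derivative lip_const f) (at t)"
    and "lip_const f > 0"
  shows "\<exists>(Z::'a set) dZ (\<Phi>::'a \<Rightarrow> 'a \<times> real). Metric_space Z dZ \<and>
           bij_betw \<Phi> UNIV (Z \<times> UNIV) \<and>
           (\<forall>x y. dist x y = sqrt ((dZ (fst (\<Phi> x)) (fst (\<Phi> y)))\<^sup>2 + (snd (\<Phi> x) - snd (\<Phi> y))\<^sup>2)) \<and>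
           (\<forall>x. f x = lip_const f * snd (\<Phi> x))"
proof -
  obtain Z :: "'a set" and \<Phi> where "bij_betw \<Phi> UNIV (Z \<times> UNIV)"
    and "\<forall>x y. dist x y = sqrt ((dist (fst (\<Phi> x)) (fst (\<Phi> y)))\<^sup>2 + (snd (\<Phi> x) - snd (\<Phi> y))\<^sup>2)"
    and "\<forall>x. snd (\<Phi> x) = f x / lip_const f"
    using alex_affine_line.product_decomposition[OF alex_affine_line_rescaled[OF assms]] by blast
  moreover have "Metric_space Z dist"
    by (simp add: Metric_space_def dist_commute dist_triangle)
  moreover have "\<forall>x. f x = lip_const f * snd (\<Phi> x)"
    using \<open>\<forall>x. snd (\<Phi> x) = f x / lip_const f\<close> assms(6) by simp
  ultimately show ?thesis by (intro exI[of _ Z] exI[of _ dist] exI[of _ \<Phi>] conjI)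
qed

end
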